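(* In the stochastic epidemic model described in the context, let $u(k)=K\,I(k)$ for all $k\ge0$ with a constant gain $0\le K\le (1-d_{\max})/v_{\max}$. Then for $k=1,2,\dots,\lfloor S_0/(\delta_{\max}I_0)\rfloor$, $$\mathbb{E}[S(k)]=\begin{cases} S_0-\dfrac{\overline{\delta}\,I_0\left(1-(1+\overline{\delta}-\overline{d_I}-K\overline{v})^k\right)}{K\overline{v}-\overline{\delta}+\overline{d_I}}, & K\overline{v}>\overline{\delta}-\overline{d_I},\\[2mm] S_0-I_0\,\overline{\delta}\,k, & K\overline{v}=\overline{\delta}-\overline{d_I}.\end{cases}$$
   Context: Time is indexed by days $k=0,1,2,\dots$. Let $(\delta(k))_{k\ge0}$, $(d_I(k))_{k\ge0}$, $(v(k))_{k\ge0}$ be three mutually independent sequences of random variables, each sequence i.i.d. in $k$, with $0\le \delta(k)\le \delta_{\max}$ (where $\delta_{\max}>0$), $0\le d_I(k)\le d_{\max}$ where $d_{\max}<1$, and $0<v_{\min}\le v(k)\le v_{\max}\le 1$. Write $\overline{\delta}=\mathbb{E}[\delta(k)]$, $\overline{d_I}=\mathbb{E}[d_I(k)]$, $\overline{v}=\mathbb{E}[v(k)]$. Given a control sequence $u(k)$, the cases evolve by $S(k+1)=S(k)-\delta(k)I(k)$, $I(k+1)=(1+\delta(k))I(k)-v(k)u(k)-d_I(k)I(k)$, $R(k+1)=R(k)+v(k)u(k)$, $D(k+1)=D(k)+d_I(k)I(k)$, with $S(0)=S_0$, $I(0)=I_0>0$, $R(0)=D(0)=0$, $I_0\delta_{\max}<S_0$.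 $\lfloor z\rfloor=\max\{n\in\mathbb{Z}:n\le z\}$. *)

theory Defs
  imports "HOL-Probability.Probability"
begin

text \<open>The arguments de, dI, v are the realised
  sequences delta(k), d_I(k), v(k); the control is given in feedback form u k (state at day k);
  x0 = (S0, I0, R0, D0).\<close>
fun epi_state :: "(nat \<Rightarrow> real) \<Rightarrow> (nat \<Rightarrow> real) \<Rightarrow> (nat \<Rightarrow> real)
    \<Rightarrow> (nat \<Rightarrow> real \<times> real \<times> real \<times> real \<Rightarrow> real)
    \<Rightarrow> real \<times> real \<times> real \<times> real \<Rightarrow> nat \<Rightarrow> real \<times> real \<times> real \<times> real" where
  "epi_state de dI v u x0 0 = x0"
| "epi_state de dI v u x0 (Suc k) =
     (case epi_state de dI v u x0 k of (S, I, R, D) \<Rightarrow>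
        (let uk = u k (S, I, R, D) in
          (S - de k * I, (1 + de k) * I - v k * uk - dI k * I, R + v k * uk, D + dI k * I)))"

end

theory Submission
  imports Defs
begin

text \<open>Under the proportional control \<open>u = K I\<close> every sample path is explicit:
  \<open>I(k) = I\<^sub>0 \<Prod>\<^sub>i\<^sub><\<^sub>k a\<^sub>i\<close> with growth factors \<open>a\<^sub>i = 1 + \<delta>(i) - d\<^sub>I(i) - K v(i)\<close>, and
  \<open>S(k) = S\<^sub>0 - \<Sum>\<^sub>j\<^sub><\<^sub>k \<delta>(j) I(j)\<close>. The variables \<open>\<delta>(j), a\<^sub>0, \<dots>, a\<^sub>j\<^sub>-\<^sub>1\<close> are functions of
  disjoint days of the independent noise, so the expectation of each summand factorises into
  \<open>\<delta>bar (1 + \<delta>bar - d\<^sub>Ibar - K vbar)\<^sup>j\<close>, and summing the geometric series gives the formula.\<close>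

lemma (in prob_space) indep_vars_blocks:
  assumes indep: "indep_vars (\<lambda>_. N) Y (A \<times> J)"
    and g: "\<And>j. j \<in> J \<Longrightarrow> g j \<in> measurable (Pi\<^sub>M A (\<lambda>_. N)) N'"
  shows "indep_vars (\<lambda>_. N') (\<lambda>j \<omega>. g j (\<lambda>a\<in>A. Y (a, j) \<omega>)) J"
proof -
  have blocks: "indep_vars (\<lambda>j. Pi\<^sub>M (A \<times> {j}) (\<lambda>_. N)) (\<lambda>j \<omega>. \<lambda>t\<in>A \<times> {j}. Y t \<omega>) J"
    by (rule indep_vars_restrict[OF indep]) (auto simp: disjoint_family_on_def)
  have "(\<lambda>x. g j (\<lambda>a\<in>A. x (a, j))) \<in> measurable (Pi\<^sub>M (A \<times> {j}) (\<lambda>_. N)) N'" if "j \<in> J" for j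
    using g[OF that] by measurable
  from indep_vars_compose2[OF blocks this] show ?thesis
    by (simp add: restrict_def cong: if_cong)
qed

lemma (in prob_space) expectation_eq_if_distr_eq:
  fixes X Y :: "'a \<Rightarrow> real"
  assumes "random_variable borel X" "random_variable borel Y" "distr M borel X = distr M borel Y"
  shows "expectation X = expectation Y"
  using integral_distr[OF assms(1), of "\<lambda>x. x"] integral_distr[OF assms(2), of "\<lambda>x. x"] assms(3)
  by simp

lemma epi_state_proportional_control:
  fixes de dI v :: "nat \<Rightarrow> real" and K S0 I0 R0 D0 :: real
  defines "x \<equiv> epi_state de dI v (\<lambda>j st. K * fst (snd st)) (S0, I0, R0, D0)"
  shows "fst (snd (x k)) = I0 * (\<Prod>i<k. 1 + de i - dI i - K * v i)"
    and "fst (x k) = S0 - I0 * (\<Sum>j<k. de j * (\<Prod>i<j. 1 + de i - dI i - K * v i))"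
proof -
  have "fst (snd (x k)) = I0 * (\<Prod>i<k. 1 + de i - dI i - K * v i) \<and>
        fst (x k) = S0 - I0 * (\<Sum>j<k. de j * (\<Prod>i<j. 1 + de i - dI i - K * v i))"
  proof (induction k)
    case (Suc k)
    then show ?case
      by (cases "x k") (simp add: x_def algebra_simps)
  qed (simp add: x_def)
  then show "fst (snd (x k)) = I0 * (\<Prod>i<k. 1 + de i - dI i - K * v i)"
    and "fst (x k) = S0 - I0 * (\<Sum>j<k. de j * (\<Prod>i<j. 1 + de i - dI i - K * v i))"
    by auto
qed

locale epidemic_rates = prob_space +
  fixes \<delta> dI v :: "nat \<Rightarrow> 'a \<Rightarrow> real"
  assumes indep: "indep_vars (\<lambda>_. borel)
          (\<lambda>(j::nat, k). if j = 0 then \<delta> k else if j = 1 then dI k else v k) ({0, 1, 2} \<times> UNIV)"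
    and int_\<delta>: "integrable M (\<delta> k)" and int_dI: "integrable M (dI k)"
    and int_v: "integrable M (v k)"
    and mean_\<delta>: "expectation (\<delta> k) = expectation (\<delta> 0)"
    and mean_dI: "expectation (dI k) = expectation (dI 0)"
    and mean_v: "expectation (v k) = expectation (v 0)"

lemma (in epidemic_rates) expectation_rate_times_growth:
  fixes K :: real
  defines "a \<equiv> 1 + expectation (\<delta> 0) - expectation (dI 0) - K * expectation (v 0)"
  shows "integrable M (\<lambda>\<omega>. \<delta> j \<omega> * (\<Prod>i<j. 1 + \<delta> i \<omega> - dI i \<omega> - K * v i \<omega>))"
    and "expectation (\<lambda>\<omega>. \<delta> j \<omega> * (\<Prod>i<j. 1 + \<delta> i \<omega> - dI i \<omega> - K * v i \<omega>))
           = expectation (\<delta> 0) * a ^ j"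
proof -
  define W where "W = (\<lambda>i \<omega>. if i = j then \<delta> j \<omega> else 1 + \<delta> i \<omega> - dI i \<omega> - K * v i \<omega>)"
  define g where "g i x = (if i = j then x 0 else 1 + x 0 - x 1 - K * x 2)"
    for i and x :: "nat \<Rightarrow> real"
  have "g i \<in> borel_measurable (Pi\<^sub>M {0, 1, 2} (\<lambda>_. borel))" for i
    unfolding g_def by measurable
  from indep_vars_blocks[where g = g, OF indep this]
  have indep_W: "indep_vars (\<lambda>_. borel) W UNIV"
    by (simp add: W_def g_def cong: if_cong)
  have int_W: "integrable M (W i)" for i
    using int_\<delta> int_dI int_v by (cases "i = j") (simp_all add: W_def)
  have mean_W: "expectation (W i) = (if i = j then expectation (\<delta> 0) else a)" for i
    using int_\<delta> int_dI int_v mean_\<delta>[of i] mean_dI[of i] mean_v[of i] mean_\<delta>[of j]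
    by (cases "i = j") (simp_all add: W_def a_def prob_space)
  have prod_W: "(\<lambda>\<omega>. \<delta> j \<omega> * (\<Prod>i<j. 1 + \<delta> i \<omega> - dI i \<omega> - K * v i \<omega>)) = (\<lambda>\<omega>. \<Prod>i\<le>j. W i \<omega>)"
    by (simp add: W_def mult.commute flip: lessThan_Suc_atMost)
  have indep_W': "indep_vars (\<lambda>_. borel) W {..j}"
    using indep_W by (rule indep_vars_subset) simp
  show "integrable M (\<lambda>\<omega>. \<delta> j \<omega> * (\<Prod>i<j. 1 + \<delta> i \<omega> - dI i \<omega> - K * v i \<omega>))"
    unfolding prod_W using indep_W' int_W by (rule indep_vars_integrable[rotated]) simp
  have "expectation (\<lambda>\<omega>. \<Prod>i\<le>j. W i \<omega>) = (\<Prod>i\<le>j. expectation (W i))"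
    using indep_W' int_W by (rule indep_vars_lebesgue_integral[rotated]) simp
  also have "\<dots> = expectation (\<delta> 0) * a ^ j"
    by (simp add: mean_W flip: lessThan_Suc_atMost)
  finally show "expectation (\<lambda>\<omega>. \<delta> j \<omega> * (\<Prod>i<j. 1 + \<delta> i \<omega> - dI i \<omega> - K * v i \<omega>))
           = expectation (\<delta> 0) * a ^ j"
    unfolding prod_W .
qed

lemma (in epidemic_rates) expectation_susceptible_proportional_control:
  fixes K S0 I0 R0 D0 :: real
  defines "a \<equiv> 1 + expectation (\<delta> 0) - expectation (dI 0) - K * expectation (v 0)"
  shows "expectation (\<lambda>\<omega>. fst (epi_state (\<lambda>j. \<delta> j \<omega>) (\<lambda>j. dI j \<omega>) (\<lambda>j. v j \<omega>)
                          (\<lambda>j st. K * fst (snd st)) (S0, I0, R0, D0) k))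
         = S0 - I0 * expectation (\<delta> 0) * (\<Sum>j<k. a ^ j)"
proof -
  let ?summand = "\<lambda>j \<omega>. \<delta> j \<omega> * (\<Prod>i<j. 1 + \<delta> i \<omega> - dI i \<omega> - K * v i \<omega>)"
  have "integrable M (\<lambda>\<omega>. \<Sum>j<k. ?summand j \<omega>)"
    using expectation_rate_times_growth(1) by (rule Bochner_Integration.integrable_sum)
  moreover have "expectation (\<lambda>\<omega>. \<Sum>j<k. ?summand j \<omega>) = expectation (\<delta> 0) * (\<Sum>j<k. a ^ j)"
    using expectation_rate_times_growth
    by (simp add: Bochner_Integration.integral_sum a_def sum_distrib_left)
  ultimately show ?thesis
    by (simp add: epi_state_proportional_control(2) prob_space)
qed

theorem lemma10:
  fixes M :: "'a measure"
    and \<delta> dI v :: "nat \<Rightarrow> 'a \<Rightarrow> real"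
    and \<delta>max dmax vmin vmax S0 I0 K :: real
  assumes "prob_space M"
    and indep: "prob_space.indep_vars M (\<lambda>_. borel)
          (\<lambda>(j::nat, k). if j = 0 then \<delta> k else if j = 1 then dI k else v k)
          ({0, 1, 2} \<times> UNIV)"
    and iid_\<delta>: "\<And>k. distr M borel (\<delta> k) = distr M borel (\<delta> 0)"
    and iid_dI: "\<And>k. distr M borel (dI k) = distr M borel (dI 0)"
    and iid_v: "\<And>k. distr M borel (v k) = distr M borel (v 0)"
    and "\<delta>max > 0" and "dmax < 1"
    and "0 < vmin" and "vmin \<le> vmax" and "vmax \<le> 1"
    and \<delta>_bd: "\<And>k \<omega>. \<omega> \<in> space M \<Longrightarrow> 0 \<le> \<delta> k \<omega> \<and> \<delta> k \<omega> \<le> \<delta>max"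
    and dI_bd: "\<And>k \<omega>. \<omega> \<in> space M \<Longrightarrow> 0 \<le> dI k \<omega> \<and> dI k \<omega> \<le> dmax"
    and v_bd: "\<And>k \<omega>. \<omega> \<in> space M \<Longrightarrow> vmin \<le> v k \<omega> \<and> v k \<omega> \<le> vmax"
    and "I0 > 0" and "I0 * \<delta>max < S0"
    and "0 \<le> K" and "K \<le> (1 - dmax) / vmax"
  shows "let S = (\<lambda>k \<omega>. fst (epi_state (\<lambda>j. \<delta> j \<omega>) (\<lambda>j. dI j \<omega>) (\<lambda>j. v j \<omega>)
                              (\<lambda>j st. K * fst (snd st)) (S0, I0, 0, 0) k));
             \<delta>bar = prob_space.expectation M (\<delta> 0);
             dbar = prob_space.expectation M (dI 0);
             vbar = prob_space.expectation M (v 0)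
         in \<forall>k::nat. 1 \<le> k \<and> int k \<le> \<lfloor>S0 / (\<delta>max * I0)\<rfloor> \<longrightarrow>
              (K * vbar > \<delta>bar - dbar \<longrightarrow>
                 prob_space.expectation M (S k) =
                   S0 - \<delta>bar * I0 * (1 - (1 + \<delta>bar - dbar - K * vbar) ^ k) / (K * vbar - \<delta>bar + dbar))
            \<and> (K * vbar = \<delta>bar - dbar \<longrightarrow>
                 prob_space.expectation M (S k) = S0 - I0 * \<delta>bar * real k)"
proof -
  \<comment> \<open>The identity holds for every \<open>k\<close>: the range of \<open>k\<close> and the bound on \<open>K\<close> only keep the
    compartments nonnegative in the model, and the bounds on the rates only give integrability.\<close>
  interpret prob_space M by fact
  have rv_\<delta>: "random_variable borel (\<delta> k)" and rv_dI: "random_variable borel (dI k)"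
    and rv_v: "random_variable borel (v k)" for k
    using indep by (simp_all add: indep_vars_def)
  interpret epidemic_rates M \<delta> dI v
  proof
    fix k
    show "integrable M (\<delta> k)"
      using rv_\<delta> by (intro integrable_const_bound[where B = \<delta>max] AE_I2) (auto dest: \<delta>_bd[of _ k])
    show "integrable M (dI k)"
      using rv_dI by (intro integrable_const_bound[where B = dmax] AE_I2) (auto dest: dI_bd[of _ k])
    show "integrable M (v k)"
      using rv_v \<open>0 < vmin\<close>
      by (intro integrable_const_bound[where B = vmax] AE_I2) (force dest: v_bd[of _ k])
    show "expectation (\<delta> k) = expectation (\<delta> 0)"
      using rv_\<delta> rv_\<delta> iid_\<delta> by (rule expectation_eq_if_distr_eq)
    show "expectation (dI k) = expectation (dI 0)"
      using rv_dI rv_dI iid_dI by (rule expectation_eq_if_distr_eq)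
    show "expectation (v k) = expectation (v 0)"
      using rv_v rv_v iid_v by (rule expectation_eq_if_distr_eq)
  qed (fact indep)
  show ?thesis
    unfolding Let_def expectation_susceptible_proportional_control
    by (auto simp: sum_gp_strict algebra_simps)
qed

end
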